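(* For any $n\geq 2$, the class $\mathcal{PO}_n$ of all finite partial orders of dimension at most $n$ does not satisfy the amalgamation property.
   Context: The dimension of a partial order $(P,<)$ is the minimum number of linear orders on $P$ whose intersection is $<$. Embeddings of partial orders are injective maps $f$ with $a<b\iff f(a)<f(b)$. A class $\mathcal{K}$ satisfies the amalgamation property if for all $\mathbf{A},\mathbf{B},\mathbf{C}\in\mathcal{K}$ and embeddings $e:\mathbf{A}\to\mathbf{B}$, $f:\mathbf{A}\to\mathbf{C}$, there are $\mathbf{D}\in\mathcal{K}$ and embeddings $g:\mathbf{B}\to\mathbf{D}$, $h:\mathbf{C}\to\mathbf{D}$ with $g\circ e=h\circ f$. *)

theory Defs
  imports Main
begin

text \<open>Carriers are taken inside the countable universe nat; since all structures in the
  class are finite, every finite partial order is isomorphic to one of these, and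
  the amalgamation property is invariant under isomorphism.\<close>

type_synonym poset = "nat set \<times> nat rel"

definition strict_po :: "poset \<Rightarrow> bool" where
  "strict_po X \<longleftrightarrow> (let (P, r) = X in
     r \<subseteq> P \<times> P \<and> (\<forall>a\<in>P. (a, a) \<notin> r) \<and>
     (\<forall>a\<in>P. \<forall>b\<in>P. \<forall>c\<in>P. (a, b) \<in> r \<longrightarrow> (b, c) \<in> r \<longrightarrow> (a, c) \<in> r))"

definition strict_linear_order_on :: "nat set \<Rightarrow> nat rel \<Rightarrow> bool" where
  "strict_linear_order_on P L \<longleftrightarrow> strict_po (P, L) \<and>
     (\<forall>a\<in>P. \<forall>b\<in>P. a \<noteq> b \<longrightarrow> (a, b) \<in> L \<or> (b, a) \<in> L)"

definition realizes :: "poset \<Rightarrow> nat \<Rightarrow> (nat \<Rightarrow> nat rel) \<Rightarrow> bool" where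
  "realizes X k L \<longleftrightarrow> (let (P, r) = X in
     (\<forall>i<k. strict_linear_order_on P (L i)) \<and>
     r = {(a, b). a \<in> P \<and> b \<in> P \<and> (\<forall>i<k. (a, b) \<in> L i)})"

definition dimension :: "poset \<Rightarrow> nat" where
  "dimension X = (LEAST k. \<exists>L. realizes X k L)"

definition PO :: "nat \<Rightarrow> poset set" where
  "PO n = {X. finite (fst X) \<and> strict_po X \<and> dimension X \<le> n}"

definition embedding :: "(nat \<Rightarrow> nat) \<Rightarrow> poset \<Rightarrow> poset \<Rightarrow> bool" where
  "embedding f X Y \<longleftrightarrow>
     f ` fst X \<subseteq> fst Y \<and> inj_on f (fst X) \<and>
     (\<forall>a\<in>fst X. \<forall>b\<in>fst X. (a, b) \<in> snd X \<longleftrightarrow> (f a, f b) \<in> snd Y)"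

definition amalgamation_property :: "poset set \<Rightarrow> bool" where
  "amalgamation_property K \<longleftrightarrow>
     (\<forall>A\<in>K. \<forall>B\<in>K. \<forall>C\<in>K. \<forall>e f. embedding e A B \<and> embedding f A C \<longrightarrow>
        (\<exists>D\<in>K. \<exists>g h. embedding g B D \<and> embedding h C D \<and>
           (\<forall>a\<in>fst A. g (e a) = h (f a))))"

end

theory Submission
  imports Defs "HOL-Library.Product_Lexorder"
begin

(* Take A the antichain a_0, ..., a_(n-1), t; B = A plus u < t and a_i < v; C = A plus the
   standard example a_i < b_j (i \<noteq> j) and t < b_j. All three have dimension at most n.
   In an amalgam D the pairs (a_i, b_i) together with (u, v) form a standard example of size
   n + 1, since a_i < v and u < t < b_j. No linear order reverses two pairs of a standard
   example, so each pair needs its own order in a realizer and D has dimension > n. *)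

lemma strict_po_iff:
  "strict_po (P, r) \<longleftrightarrow> r \<subseteq> P \<times> P \<and> (\<forall>a\<in>P. (a, a) \<notin> r) \<and>
     (\<forall>a\<in>P. \<forall>b\<in>P. \<forall>c\<in>P. (a, b) \<in> r \<longrightarrow> (b, c) \<in> r \<longrightarrow> (a, c) \<in> r)"
  by (simp add: strict_po_def)

lemma strict_po_trans:
  assumes "strict_po (P, r)" "(a, b) \<in> r" "(b, c) \<in> r"
  shows "(a, c) \<in> r"
  using assms unfolding strict_po_iff by blast

lemma realizes_iff:
  "realizes (P, r) k L \<longleftrightarrow> (\<forall>i<k. strict_linear_order_on P (L i)) \<and>
     r = {(a, b). a \<in> P \<and> b \<in> P \<and> (\<forall>i<k. (a, b) \<in> L i)}"
  by (simp add: realizes_def)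

lemma embedding_mem: "embedding f X Y \<Longrightarrow> a \<in> fst X \<Longrightarrow> f a \<in> fst Y"
  by (auto simp: embedding_def)

lemma embedding_rel_iff:
  "embedding f X Y \<Longrightarrow> a \<in> fst X \<Longrightarrow> b \<in> fst X \<Longrightarrow> (f a, f b) \<in> snd Y \<longleftrightarrow> (a, b) \<in> snd X"
  by (auto simp: embedding_def)

lemma embedding_neq: "embedding f X Y \<Longrightarrow> a \<in> fst X \<Longrightarrow> b \<in> fst X \<Longrightarrow> a \<noteq> b \<Longrightarrow> f a \<noteq> f b"
  by (auto simp: embedding_def inj_on_def)

definition rank_rel :: "nat set \<Rightarrow> (nat \<Rightarrow> 'a::linorder) \<Rightarrow> nat rel" where
  "rank_rel P \<rho> = {(a, b). a \<in> P \<and> b \<in> P \<and> \<rho> a < \<rho> b}"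

lemma strict_linear_order_on_rank_rel:
  "inj_on \<rho> P \<Longrightarrow> strict_linear_order_on P (rank_rel P \<rho>)"
  unfolding strict_linear_order_on_def strict_po_iff rank_rel_def inj_on_def
  by (auto, metis neq_iff)

lemma realizes_by_rankings:
  fixes \<rho> :: "nat \<Rightarrow> nat \<Rightarrow> 'a::linorder"
  assumes "\<forall>i<k. inj_on (\<rho> i) P" "r \<subseteq> P \<times> P"
    and "\<forall>a\<in>P. \<forall>b\<in>P. (a, b) \<in> r \<longleftrightarrow> (\<forall>i<k. \<rho> i a < \<rho> i b)"
  shows "realizes (P, r) k (\<lambda>i. rank_rel P (\<rho> i))"
  using assms unfolding realizes_iff
  by (auto simp: strict_linear_order_on_rank_rel) (auto simp: rank_rel_def)

lemma realizes_imp_strict_po: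
  assumes "realizes (P, r) k L" "0 < k"
  shows "strict_po (P, r)"
proof -
  have L: "\<forall>i<k. strict_po (P, L i)"
    and r: "r = {(a, b). a \<in> P \<and> b \<in> P \<and> (\<forall>i<k. (a, b) \<in> L i)}"
    using assms(1) by (simp_all add: realizes_iff strict_linear_order_on_def)
  have "(a, a) \<notin> r" for a
    using L assms(2) unfolding r strict_po_iff by blast
  moreover have "(a, c) \<in> r" if "(a, b) \<in> r" "(b, c) \<in> r" for a b c
    using that L strict_po_trans unfolding r by blast
  ultimately show ?thesis
    unfolding strict_po_iff using r by blast
qed

lemma dimension_le_if_realizes: "realizes X k L \<Longrightarrow> dimension X \<le> k"
  unfolding dimension_def by (rule Least_le) blast

lemma mem_PO_by_rankings:
  fixes \<rho> :: "nat \<Rightarrow> nat \<Rightarrow> 'a::linorder"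
  assumes "finite P" "0 < k" "k \<le> n" "\<forall>i<k. inj_on (\<rho> i) P" "r \<subseteq> P \<times> P"
    and "\<forall>a\<in>P. \<forall>b\<in>P. (a, b) \<in> r \<longleftrightarrow> (\<forall>i<k. \<rho> i a < \<rho> i b)"
  shows "(P, r) \<in> PO n"
proof -
  have "realizes (P, r) k (\<lambda>i. rank_rel P (\<rho> i))"
    using assms(4-6) by (rule realizes_by_rankings)
  then show ?thesis
    using assms(1-3) realizes_imp_strict_po dimension_le_if_realizes
    unfolding PO_def by fastforce
qed

lemma antichain_mem_PO:
  assumes "finite P" "2 \<le> n"
  shows "(P, {}) \<in> PO n"
proof (rule mem_PO_by_rankings)
  let ?\<rho> = "\<lambda>i::nat. \<lambda>x. if i = 0 then int x else - int x"
  show "\<forall>i<2. inj_on (?\<rho> i) P" by (auto simp: inj_on_def)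
  show "\<forall>a\<in>P. \<forall>b\<in>P. (a, b) \<in> {} \<longleftrightarrow> (\<forall>i<2. ?\<rho> i a < ?\<rho> i b)"
    by (auto simp: less_2_cases_iff ex_disj_distrib)
qed (use assms in auto)

definition height :: "nat rel \<Rightarrow> nat set \<Rightarrow> nat \<Rightarrow> nat" where
  "height r P x = card {z \<in> P. (z, x) \<in> r}"

lemma height_strict_mono:
  assumes "finite P" "strict_po (P, r)" "(x, y) \<in> r"
  shows "height r P x < height r P y"
  unfolding height_def
proof (rule psubset_card_mono)
  show "finite {z \<in> P. (z, y) \<in> r}" using assms(1) by simp
  have "x \<in> P" "(x, x) \<notin> r" using assms(2,3) unfolding strict_po_iff by auto
  then show "{z \<in> P. (z, x) \<in> r} \<subset> {z \<in> P. (z, y) \<in> r}"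
    using assms(2,3) strict_po_trans by blast
qed

lemma finite_strict_po_realizable:
  assumes fin: "finite P" and po: "strict_po (P, r)"
  shows "\<exists>k L. realizes (P, r) k L"
proof -
  \<comment> \<open>The ranking for c puts the up-set of c on top, each part ordered by height;
    so it extends r, and c lies below b in it only if (c, b) \<in> r.\<close>
  define key where "key c x = (c = x \<or> (c, x) \<in> r, height r P x, x)" for c x
  define cs where "cs = sorted_list_of_set P"
  have set_cs: "set cs = P" using fin cs_def by simp
  have rP: "r \<subseteq> P \<times> P" using po unfolding strict_po_iff by blast
  have key_mono: "key c a < key c b" if "(a, b) \<in> r" for a b c
  proof -
    have "c = a \<or> (c, a) \<in> r \<Longrightarrow> (c, b) \<in> r"
      using that po strict_po_trans by blast
    then show ?thesis
      using height_strict_mono[OF fin po that] unfolding key_def by auto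
  qed
  have key_reflects: "(a, b) \<in> r" if "key a a < key a b" for a b
    using that unfolding key_def by (cases "(a, b) \<in> r") auto
  have "(a, b) \<in> r \<longleftrightarrow> (\<forall>c\<in>set cs. key c a < key c b)" if "a \<in> P" for a b
    using key_mono key_reflects[of a b] that unfolding set_cs by blast
  then have "\<forall>a\<in>P. \<forall>b\<in>P. (a, b) \<in> r \<longleftrightarrow> (\<forall>i<length cs. key (cs ! i) a < key (cs ! i) b)"
    by (simp add: all_set_conv_all_nth)
  moreover have "\<forall>i<length cs. inj_on (key (cs ! i)) P"
    by (simp add: inj_on_def key_def)
  ultimately have "realizes (P, r) (length cs) (\<lambda>i. rank_rel P (key (cs ! i)))"
    using rP by (intro realizes_by_rankings)
  then show ?thesis by blast
qed

lemma finite_strict_po_realizes_dimension: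
  assumes "finite P" "strict_po (P, r)"
  shows "\<exists>L. realizes (P, r) (dimension (P, r)) L"
  unfolding dimension_def using finite_strict_po_realizable[OF assms] by (rule LeastI_ex)

definition standard_example :: "poset \<Rightarrow> nat \<Rightarrow> (nat \<Rightarrow> nat) \<Rightarrow> (nat \<Rightarrow> nat) \<Rightarrow> bool" where
  "standard_example X m x y \<longleftrightarrow>
     (\<forall>i<m. x i \<in> fst X \<and> y i \<in> fst X \<and> x i \<noteq> y i \<and> (x i, y i) \<notin> snd X) \<and>
     (\<forall>i<m. \<forall>j<m. i \<noteq> j \<longrightarrow> (x i, y j) \<in> snd X)"

lemma realizer_reverses_unrelated:
  assumes "realizes (P, r) k L" "a \<in> P" "b \<in> P" "a \<noteq> b" "(a, b) \<notin> r"
  shows "\<exists>i<k. (b, a) \<in> L i"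
  using assms unfolding realizes_iff strict_linear_order_on_def by blast

lemma standard_example_le_realizer:
  assumes R: "realizes (P, r) k L" and S: "standard_example (P, r) m x y"
  shows "m \<le> k"
proof -
  have "\<forall>i<m. \<exists>c<k. (y i, x i) \<in> L c"
    using realizer_reverses_unrelated[OF R] S unfolding standard_example_def by simp
  then obtain c where c: "\<forall>i<m. c i < k \<and> (y i, x i) \<in> L (c i)"
    by metis
  \<comment> \<open>Two pairs reversed by the same linear order would close the cycle
    x i < y j < x j < y i < x i in it.\<close>
  have "inj_on c {..<m}"
  proof (rule inj_onI, rule ccontr)
    fix i j assume ij: "i \<in> {..<m}" "j \<in> {..<m}" "c i = c j" "i \<noteq> j"
    have "r \<subseteq> L (c i)" and po: "strict_po (P, L (c i))"
      using R c ij unfolding realizes_iff strict_linear_order_on_def by auto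
    moreover have "(x i, y j) \<in> r" "(x j, y i) \<in> r"
      using S ij unfolding standard_example_def by auto
    ultimately have "(x i, y j) \<in> L (c i)" "(y j, x j) \<in> L (c i)"
      "(x j, y i) \<in> L (c i)" "(y i, x i) \<in> L (c i)"
      using c ij by auto
    then have "(x i, x i) \<in> L (c i)"
      using po strict_po_trans by meson
    then show False
      using po S ij unfolding strict_po_iff standard_example_def by auto
  qed
  moreover have "c ` {..<m} \<subseteq> {..<k}" using c by auto
  ultimately show ?thesis using card_inj_on_le[of c "{..<m}" "{..<k}"] by simp
qed

lemma standard_example_le_dimension:
  assumes "finite P" "strict_po (P, r)" "standard_example (P, r) m x y"
  shows "m \<le> dimension (P, r)"
  using finite_strict_po_realizes_dimension[OF assms(1,2)] standard_example_le_realizer assms(3)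
  by blast

lemma standard_example_embedding:
  assumes "standard_example X m x y" "embedding f X Y"
  shows "standard_example Y m (f \<circ> x) (f \<circ> y)"
  using assms embedding_mem embedding_rel_iff embedding_neq
  unfolding standard_example_def by simp

lemma standard_example_extend:
  assumes "standard_example X m x y" "x' \<in> fst X" "y' \<in> fst X" "x' \<noteq> y'" "(x', y') \<notin> snd X"
    and "\<forall>i<m. (x i, y') \<in> snd X \<and> (x', y i) \<in> snd X"
  shows "standard_example X (Suc m) (x(m := x')) (y(m := y'))"
  using assms unfolding standard_example_def by (auto simp: less_Suc_eq)

(* Elements: a_i = i and b_i = n + i for i < n, u = 2n, v = 2n + 1, t = 2n + 2. *)
definition amalg_A :: "nat \<Rightarrow> poset" where
  "amalg_A n = ({..<n} \<union> {2*n+2}, {})"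

definition amalg_B :: "nat \<Rightarrow> poset" where
  "amalg_B n = ({..<n} \<union> {2*n, 2*n+1, 2*n+2}, {(2*n, 2*n+2)} \<union> {(i, 2*n+1) |i. i < n})"

definition amalg_C :: "nat \<Rightarrow> poset" where
  "amalg_C n = ({..<2*n} \<union> {2*n+2},
     {(2*n+2, n+j) |j. j < n} \<union> {(i, n+j) |i j. i < n \<and> j < n \<and> i \<noteq> j})"

lemma amalg_A_mem_PO: "2 \<le> n \<Longrightarrow> amalg_A n \<in> PO n"
  unfolding amalg_A_def by (simp add: antichain_mem_PO)

lemma amalg_B_mem_PO:
  assumes "2 \<le> n"
  shows "amalg_B n \<in> PO n"
proof -
  \<comment> \<open>a_0 < ... < a_(n-1) < v < u < t, and u < t < a_(n-1) < ... < a_0 < v\<close>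
  define \<rho> :: "nat \<Rightarrow> nat \<Rightarrow> int" where
    "\<rho> i x = (if i = 0 then
       (if x = 2*n then 2 * int n + 1 else if x = 2*n+1 then 2 * int n else int x)
     else
       (if x = 2*n then - 2 * int n - 2 else if x = 2*n+2 then - 2 * int n - 1
        else if x = 2*n+1 then 1 else - int x))"
    for i x
  show ?thesis unfolding amalg_B_def
  proof (rule mem_PO_by_rankings)
    show "\<forall>i<2. inj_on (\<rho> i) ({..<n} \<union> {2*n, 2*n+1, 2*n+2})"
      by (auto simp: less_2_cases_iff inj_on_def \<rho>_def)
    show "\<forall>a\<in>{..<n} \<union> {2*n, 2*n+1, 2*n+2}. \<forall>b\<in>{..<n} \<union> {2*n, 2*n+1, 2*n+2}.
      (a, b) \<in> {(2*n, 2*n+2)} \<union> {(i, 2*n+1) |i. i < n} \<longleftrightarrow> (\<forall>i<2. \<rho> i a < \<rho> i b)"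
      by (auto simp: less_2_cases_iff ex_disj_distrib \<rho>_def)
  qed (use assms in auto)
qed

lemma amalg_C_mem_PO:
  assumes "2 \<le> n"
  shows "amalg_C n \<in> PO n"
proof -
  \<comment> \<open>ranking i: the a_j with j \<noteq> i, then t < b_i < a_i, then the b_j with j \<noteq> i\<close>
  define \<rho> :: "nat \<Rightarrow> nat \<Rightarrow> nat" where
    "\<rho> i x = (if x = 2*n+2 then n else if x = i then n+2 else if x = n+i then n+1
       else if x < n then x else 2*n+3+x)"
    for i x
  show ?thesis unfolding amalg_C_def
  proof (rule mem_PO_by_rankings)
    show "\<forall>i<n. inj_on (\<rho> i) ({..<2*n} \<union> {2*n+2})"
      by (auto simp: inj_on_def \<rho>_def)
    show "\<forall>a\<in>{..<2*n} \<union> {2*n+2}. \<forall>b\<in>{..<2*n} \<union> {2*n+2}.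
      (a, b) \<in> {(2*n+2, n+j) |j. j < n} \<union> {(i, n+j) |i j. i < n \<and> j < n \<and> i \<noteq> j}
      \<longleftrightarrow> (\<forall>i<n. \<rho> i a < \<rho> i b)"
    proof (intro ballI iffI)
      fix a b
      assume "(a, b) \<in> {(2*n+2, n+j) |j. j < n} \<union> {(i, n+j) |i j. i < n \<and> j < n \<and> i \<noteq> j}"
      then show "\<forall>i<n. \<rho> i a < \<rho> i b" by (auto simp: \<rho>_def)
    next
      fix a b
      assume ab: "a \<in> {..<2*n} \<union> {2*n+2}" "b \<in> {..<2*n} \<union> {2*n+2}"
        and H: "\<forall>i<n. \<rho> i a < \<rho> i b"
      \<comment> \<open>Each unrelated pair is reversed by one of the rankings 0, 1, a, a - n, b - n.\<close>
      have "\<rho> 0 a < \<rho> 0 b" "\<rho> 1 a < \<rho> 1 b" using H assms by auto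
      moreover have "a < n \<Longrightarrow> \<rho> a a < \<rho> a b" "n \<le> a \<Longrightarrow> a < 2*n \<Longrightarrow> \<rho> (a - n) a < \<rho> (a - n) b"
        "n \<le> b \<Longrightarrow> b < 2*n \<Longrightarrow> \<rho> (b - n) a < \<rho> (b - n) b"
        using H by auto
      ultimately show "(a, b) \<in> {(2*n+2, n+j) |j. j < n} \<union> {(i, n+j) |i j. i < n \<and> j < n \<and> i \<noteq> j}"
        using ab by (auto simp: \<rho>_def split: if_splits intro!: exI[of _ "b - n"])
    qed
  qed (use assms in auto)
qed

lemma embedding_amalg_A_B: "embedding id (amalg_A n) (amalg_B n)"
  by (auto simp: embedding_def amalg_A_def amalg_B_def)

lemma embedding_amalg_A_C: "embedding id (amalg_A n) (amalg_C n)"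
  by (auto simp: embedding_def amalg_A_def amalg_C_def)

lemma standard_example_amalg_C: "standard_example (amalg_C n) n id ((+) n)"
  unfolding standard_example_def amalg_C_def by auto

lemma amalgam_standard_example:
  assumes po: "strict_po (P, r)"
    and g: "embedding g (amalg_B n) (P, r)" and h: "embedding h (amalg_C n) (P, r)"
    and gh: "\<forall>a\<in>fst (amalg_A n). g a = h a"
  shows "standard_example (P, r) (Suc n) (h(n := g (2*n))) ((\<lambda>i. h (n+i))(n := g (2*n+1)))"
proof (rule standard_example_extend)
  show "standard_example (P, r) n h (\<lambda>i. h (n+i))"
    using standard_example_embedding[OF standard_example_amalg_C h] by (simp add: comp_def)
  have B: "2*n \<in> fst (amalg_B n)" "2*n+1 \<in> fst (amalg_B n)" "2*n+2 \<in> fst (amalg_B n)"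
    "(2*n, 2*n+1) \<notin> snd (amalg_B n)" "(2*n, 2*n+2) \<in> snd (amalg_B n)"
    by (auto simp: amalg_B_def)
  show "g (2*n) \<in> fst (P, r)" "g (2*n+1) \<in> fst (P, r)"
    using embedding_mem[OF g] B by auto
  show "g (2*n) \<noteq> g (2*n+1)"
    using embedding_neq[OF g] B by auto
  show "(g (2*n), g (2*n+1)) \<notin> snd (P, r)"
    using embedding_rel_iff[OF g] B by auto
  show "\<forall>i<n. (h i, g (2*n+1)) \<in> snd (P, r) \<and> (g (2*n), h (n+i)) \<in> snd (P, r)"
  proof (intro allI impI conjI)
    fix i assume "i < n"
    have "h i = g i"
      using gh \<open>i < n\<close> by (simp add: amalg_A_def)
    then show "(h i, g (2*n+1)) \<in> snd (P, r)"
      using embedding_rel_iff[OF g, of i "2*n+1"] \<open>i < n\<close> by (simp add: amalg_B_def)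
    have "(g (2*n), g (2*n+2)) \<in> r"
      using embedding_rel_iff[OF g] B by auto
    moreover have "g (2*n+2) = h (2*n+2)"
      using gh by (simp add: amalg_A_def)
    moreover have "(h (2*n+2), h (n+i)) \<in> r"
      using embedding_rel_iff[OF h, of "2*n+2" "n+i"] \<open>i < n\<close> by (simp add: amalg_C_def)
    ultimately show "(g (2*n), h (n+i)) \<in> snd (P, r)"
      using strict_po_trans[OF po] by simp
  qed
qed

theorem proposition2p3:
  fixes n :: nat
  assumes "n \<ge> 2"
  shows "\<not> amalgamation_property (PO n)"
proof
  assume AP: "amalgamation_property (PO n)"
  have "\<exists>D\<in>PO n. \<exists>g h. embedding g (amalg_B n) D \<and> embedding h (amalg_C n) D \<and>
      (\<forall>a\<in>fst (amalg_A n). g (id a) = h (id a))"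
    using AP[unfolded amalgamation_property_def, rule_format,
        OF amalg_A_mem_PO[OF assms] amalg_B_mem_PO[OF assms] amalg_C_mem_PO[OF assms]
          conjI[OF embedding_amalg_A_B embedding_amalg_A_C]] .
  then obtain P r g h where D: "(P, r) \<in> PO n"
    and g: "embedding g (amalg_B n) (P, r)" and h: "embedding h (amalg_C n) (P, r)"
    and gh: "\<forall>a\<in>fst (amalg_A n). g a = h a"
    by fastforce
  have fin: "finite P" and po: "strict_po (P, r)" and dim: "dimension (P, r) \<le> n"
    using D unfolding PO_def by auto
  have "Suc n \<le> dimension (P, r)"
    using standard_example_le_dimension[OF fin po amalgam_standard_example[OF po g h gh]] .
  with dim show False by simp
qed

end
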